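(* Let $k\ge1$ and let $\alpha_0,\dots,\alpha_k$, $\beta_0,\dots,\beta_{k-1}$ be real numbers with $\alpha_k=1$ and $|\alpha_0|+|\beta_0|>0$. Consider the explicit linear multistep method $\sum_{\sigma=0}^k\alpha_\sigma y_{n+\sigma}=\Delta t\sum_{\sigma=0}^{k-1}\beta_\sigma f_{n+\sigma}$ for $\dot y=f(y)$, with polynomials $\varrho(X)=\sum_{j=0}^k\alpha_jX^j$ and $\sigma(X)=\sum_{j=0}^{k-1}\beta_jX^j$. Assume the method is stable, i.e. every root of $\varrho$ has modulus $\le1$ and the roots of modulus $1$ are simple. Assume also that it is of order at least $1$, i.e. $\varrho(1)=0$ and $\varrho'(1)=\sigma(1)\neq0$. Then the stability region of the method contains no positive real number.
   Context: The stability region of the method is the set of $\mu\in\mathbb{C}$ such that every root $\zeta$ of the polynomial $\varrho(\zeta)-\mu\,\sigma(\zeta)$ satisfies $|\zeta|\le1$, and the roots with $|\zeta|=1$ are simple. Equivalently, it is the set of $\mu$ for which all solutions of $\sum_{\sigma=0}^k\alpha_\sigma x_{n+\sigma}=\mu\sum_{\sigma=0}^{k-1}\beta_\sigma x_{n+\sigma}$ are bounded. *)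

theory Defs
  imports "HOL-Analysis.Analysis" "HOL-Computational_Algebra.Polynomial"
begin

definition rho_poly :: "(nat \<Rightarrow> real) \<Rightarrow> nat \<Rightarrow> complex poly" where
  "rho_poly alpha k = (\<Sum>j\<le>k. monom (complex_of_real (alpha j)) j)"

definition sigma_poly :: "(nat \<Rightarrow> real) \<Rightarrow> nat \<Rightarrow> complex poly" where
  "sigma_poly beta k = (\<Sum>j<k. monom (complex_of_real (beta j)) j)"

definition root_condition :: "complex poly \<Rightarrow> bool" where
  "root_condition p \<longleftrightarrow>
     (\<forall>z. poly p z = 0 \<longrightarrow> cmod z \<le> 1 \<and> (cmod z = 1 \<longrightarrow> order z p = 1))"

definition stability_region :: "(nat \<Rightarrow> real) \<Rightarrow> (nat \<Rightarrow> real) \<Rightarrow> nat \<Rightarrow> complex set" where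
  "stability_region alpha beta k =
     {mu. root_condition (rho_poly alpha k - smult mu (sigma_poly beta k))}"

end

theory Submission
  imports Defs
begin

text \<open>Both characteristic polynomials have real coefficients, so on the real axis they are real
polynomials.  Since \<open>\<rho>\<close> is monic and, by the root condition, has no real root beyond \<open>1\<close>,
it is positive on \<open>(1, \<infinity>)\<close>; as \<open>\<rho>(1) = 0\<close> this forces \<open>\<sigma>(1) = \<rho>'(1) > 0\<close>.  For
\<open>\<mu> > 0\<close> the polynomial \<open>\<rho> - \<mu>\<sigma>\<close> is still monic (\<open>\<sigma>\<close> has degree \<open>< k\<close>) but negative at
\<open>1\<close>, so it has a real root \<open>> 1\<close>, violating the root condition.\<close>

lemma poly_sum_monom_of_real:
  "poly (\<Sum>j\<in>A. monom (of_real (c j)) j) (of_real t :: 'a::{comm_ring_1,real_algebra_1})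
     = of_real (poly (\<Sum>j\<in>A. monom (c j) j) t)"
  by (induction A rule: infinite_finite_induct) (simp_all add: poly_monom)

lemma poly_pderiv_sum_monom_of_real:
  "poly (pderiv (\<Sum>j\<in>A. monom (of_real (c j)) j)) (of_real t :: 'a::{idom,real_algebra_1})
     = of_real (poly (pderiv (\<Sum>j\<in>A. monom (c j) j)) t)"
  by (induction A rule: infinite_finite_induct) (simp_all add: pderiv_add pderiv_monom poly_monom)

lemma lead_coeff_eq_coeff:
  assumes "degree p \<le> k" "coeff p k \<noteq> 0"
  shows "lead_coeff p = coeff p k"
  using assms le_degree by (metis antisym)

lemma poly_root_ge:
  fixes p :: "real poly"
  assumes "lead_coeff p > 0" "poly p a \<le> 0"
  shows "\<exists>t\<ge>a. poly p t = 0"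
proof -
  obtain n where n: "\<forall>x\<ge>n. poly p x \<ge> lead_coeff p"
    using poly_pinfty_gt_lc[OF assms(1)] by blast
  have "poly p (max n a) \<ge> 0"
    using n assms(1) by (meson max.cobounded1 order.trans less_imp_le)
  then obtain t where "a \<le> t" "poly p t = 0"
    using IVT[of "poly p" a 0 "max n a"] assms(2) by auto
  then show ?thesis by blast
qed

lemma poly_pos_beyond_roots:
  fixes p :: "real poly"
  assumes "lead_coeff p > 0" "\<And>t. t > a \<Longrightarrow> poly p t \<noteq> 0" "t > a"
  shows "poly p t > 0"
  using poly_root_ge[OF assms(1), of t] assms(2,3) by force

lemma poly_pderiv_nonneg_at_root:
  fixes p :: "real poly"
  assumes "poly p a = 0" "\<And>t. t > a \<Longrightarrow> poly p t > 0"
  shows "poly (pderiv p) a \<ge> 0"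
proof (rule ccontr)
  assume "\<not> poly (pderiv p) a \<ge> 0"
  then obtain d where "d > 0" "\<forall>h>0. h < d \<longrightarrow> poly p a > poly p (a + h)"
    using DERIV_neg_dec_right[OF poly_DERIV[of p a]] by auto
  then have "poly p (a + d/2) < 0"
    using assms(1) by simp
  with assms(2)[of "a + d/2"] \<open>d > 0\<close> show False by simp
qed

lemma root_condition_real_root_le_1:
  assumes "root_condition p" "poly p (complex_of_real t) = 0"
  shows "t \<le> 1"
  using assms unfolding root_condition_def by force

definition rho_real :: "(nat \<Rightarrow> real) \<Rightarrow> nat \<Rightarrow> real poly" where
  "rho_real alpha k = (\<Sum>j\<le>k. monom (alpha j) j)"

definition sigma_real :: "(nat \<Rightarrow> real) \<Rightarrow> nat \<Rightarrow> real poly" where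
  "sigma_real beta k = (\<Sum>j<k. monom (beta j) j)"

lemma poly_rho_poly_of_real:
  "poly (rho_poly alpha k) (of_real t) = of_real (poly (rho_real alpha k) t)"
  unfolding rho_poly_def rho_real_def by (rule poly_sum_monom_of_real)

lemma poly_sigma_poly_of_real:
  "poly (sigma_poly beta k) (of_real t) = of_real (poly (sigma_real beta k) t)"
  unfolding sigma_poly_def sigma_real_def by (rule poly_sum_monom_of_real)

lemma poly_pderiv_rho_poly_of_real:
  "poly (pderiv (rho_poly alpha k)) (of_real t) = of_real (poly (pderiv (rho_real alpha k)) t)"
  unfolding rho_poly_def rho_real_def by (rule poly_pderiv_sum_monom_of_real)

lemma coeff_rho_real: "coeff (rho_real alpha k) n = (if n \<le> k then alpha n else 0)"
  by (simp add: rho_real_def coeff_sum coeff_monom)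

lemma coeff_sigma_real: "coeff (sigma_real beta k) n = (if n < k then beta n else 0)"
  by (simp add: sigma_real_def coeff_sum coeff_monom)

lemma lead_coeff_rho_minus_sigma:
  assumes "alpha k = 1"
  shows "lead_coeff (rho_real alpha k - smult x (sigma_real beta k)) = 1"
proof -
  have "degree (rho_real alpha k - smult x (sigma_real beta k)) \<le> k"
    by (rule degree_le) (simp add: coeff_rho_real coeff_sigma_real)
  moreover have "coeff (rho_real alpha k - smult x (sigma_real beta k)) k = 1"
    using assms by (simp add: coeff_rho_real coeff_sigma_real)
  ultimately show ?thesis
    using lead_coeff_eq_coeff by fastforce
qed

lemma sigma_real_pos_at_1:
  assumes "alpha k = 1"
    and "root_condition (rho_poly alpha k)"
    and "poly (rho_poly alpha k) 1 = 0"
    and "poly (pderiv (rho_poly alpha k)) 1 = poly (sigma_poly beta k) 1"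
    and "poly (sigma_poly beta k) 1 \<noteq> 0"
  shows "poly (sigma_real beta k) 1 > 0"
proof -
  have rho_1: "poly (rho_real alpha k) 1 = 0"
    using assms(3) poly_rho_poly_of_real[of alpha k 1] by simp
  have lead_pos: "lead_coeff (rho_real alpha k) > 0"
    using lead_coeff_rho_minus_sigma[of alpha k 0, OF assms(1)] by simp
  have no_root: "poly (rho_real alpha k) t \<noteq> 0" if "t > 1" for t
    using root_condition_real_root_le_1[OF assms(2), of t] poly_rho_poly_of_real that by force
  have "poly (rho_real alpha k) t > 0" if "t > 1" for t
    using poly_pos_beyond_roots[OF lead_pos no_root that] .
  with rho_1 have "poly (pderiv (rho_real alpha k)) 1 \<ge> 0"
    by (rule poly_pderiv_nonneg_at_root)
  moreover have "poly (sigma_real beta k) 1 = poly (pderiv (rho_real alpha k)) 1"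
    using assms(4) poly_pderiv_rho_poly_of_real[of alpha k 1] poly_sigma_poly_of_real[of beta k 1]
    by simp
  moreover have "poly (sigma_real beta k) 1 \<noteq> 0"
    using assms(5) poly_sigma_poly_of_real[of beta k 1] by simp
  ultimately show ?thesis by simp
qed

theorem lemma2p4:
  fixes alpha beta :: "nat \<Rightarrow> real" and k :: nat
  assumes "k \<ge> 1"
    and "alpha k = 1"
    and "\<bar>alpha 0\<bar> + \<bar>beta 0\<bar> > 0"
    and "root_condition (rho_poly alpha k)"
    and "poly (rho_poly alpha k) 1 = 0"
    and "poly (pderiv (rho_poly alpha k)) 1 = poly (sigma_poly beta k) 1"
    and "poly (sigma_poly beta k) 1 \<noteq> 0"
  shows "\<forall>x::real. x > 0 \<longrightarrow> complex_of_real x \<notin> stability_region alpha beta k"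
proof (intro allI impI notI)
  fix x :: real
  assume "x > 0" and stable: "complex_of_real x \<in> stability_region alpha beta k"
  define q where "q = rho_real alpha k - smult x (sigma_real beta k)"
  have "poly (sigma_real beta k) 1 > 0"
    using sigma_real_pos_at_1 assms(2,4-7) by blast
  then have q_1: "poly q 1 < 0"
    using \<open>x > 0\<close> assms(5) poly_rho_poly_of_real[of alpha k 1] by (simp add: q_def)
  moreover have "lead_coeff q = 1"
    unfolding q_def by (rule lead_coeff_rho_minus_sigma[of alpha k, OF assms(2)])
  ultimately obtain s where "s \<ge> 1" "poly q s = 0"
    using poly_root_ge[of q 1] by auto
  moreover have "poly (rho_poly alpha k - smult (of_real x) (sigma_poly beta k)) (of_real s) = 0"
    using \<open>poly q s = 0\<close> by (simp add: q_def poly_rho_poly_of_real poly_sigma_poly_of_real)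
  then have "s \<le> 1"
    using stable root_condition_real_root_le_1 unfolding stability_region_def by blast
  ultimately show False
    using q_1 by simp
qed

end
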